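(* Let $G$ be a connected graph of order $n_G$ and let $H$ be a connected subgraph of $G$ of order $n_H$. Then for each integer $k$ with $3\le k\le n_H$ we have $px_k(G)\le px_k(H)+n_G-n_H$, and for each integer $k$ with $n_H\le k\le n_G$ we have $px_k(G)\le px_{n_H}(H)+n_G-n_H$.
   Context: All graphs are finite, simple and undirected. An edge-coloring of a graph assigns colors to edges, adjacent edges being allowed to share a color. A tree $T$ in an edge-colored graph is a proper tree if no two adjacent edges of $T$ receive the same color. For a connected graph $G$ of order $n$, an integer $k$ with $2\le k\le n$ and a set $S\subseteq V(G)$, an $S$-tree is a tree in $G$ containing all vertices of $S$. An edge-coloring of $G$ is a $k$-proper coloring if for every $k$-element subset $S\subseteq V(G)$ there is a proper $S$-tree in $G$. The $k$-proper index $px_k(G)$ is the minimum number of colors in a $k$-proper coloring of $G$. *)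

theory Defs
  imports Main
begin

definition graph :: "'a set \<Rightarrow> 'a set set \<Rightarrow> bool" where
  "graph V E \<longleftrightarrow> finite V \<and> (\<forall>e\<in>E. e \<subseteq> V \<and> card e = 2)"

definition adj_rel :: "'a set set \<Rightarrow> ('a \<times> 'a) set" where
  "adj_rel E = {(x, y). {x, y} \<in> E}"

definition connected_graph :: "'a set \<Rightarrow> 'a set set \<Rightarrow> bool" where
  "connected_graph V E \<longleftrightarrow> graph V E \<and> V \<noteq> {} \<and>
     (\<forall>u\<in>V. \<forall>v\<in>V. (u, v) \<in> (adj_rel E)\<^sup>*)"

definition subgraph :: "'a set \<Rightarrow> 'a set set \<Rightarrow> 'a set \<Rightarrow> 'a set set \<Rightarrow> bool" where
  "subgraph VH EH V E \<longleftrightarrow> graph VH EH \<and> VH \<subseteq> V \<and> EH \<subseteq> E"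

definition is_cycle :: "'a set set \<Rightarrow> 'a list \<Rightarrow> bool" where
  "is_cycle E xs \<longleftrightarrow> length xs \<ge> 3 \<and> distinct xs \<and>
     (\<forall>i < length xs. {xs ! i, xs ! ((i + 1) mod length xs)} \<in> E)"

definition acyclic_graph :: "'a set set \<Rightarrow> bool" where
  "acyclic_graph E \<longleftrightarrow> (\<nexists>xs. is_cycle E xs)"

definition tree_in :: "'a set \<Rightarrow> 'a set set \<Rightarrow> 'a set \<Rightarrow> 'a set set \<Rightarrow> bool" where
  "tree_in V E VT ET \<longleftrightarrow> subgraph VT ET V E \<and> connected_graph VT ET \<and> acyclic_graph ET"

definition proper_edges :: "('a set \<Rightarrow> nat) \<Rightarrow> 'a set set \<Rightarrow> bool" where
  "proper_edges c ET \<longleftrightarrow>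
     (\<forall>e\<in>ET. \<forall>f\<in>ET. e \<noteq> f \<and> e \<inter> f \<noteq> {} \<longrightarrow> c e \<noteq> c f)"

definition k_proper_coloring :: "'a set \<Rightarrow> 'a set set \<Rightarrow> nat \<Rightarrow> ('a set \<Rightarrow> nat) \<Rightarrow> bool" where
  "k_proper_coloring V E k c \<longleftrightarrow>
     (\<forall>S. S \<subseteq> V \<and> card S = k \<longrightarrow>
        (\<exists>VT ET. S \<subseteq> VT \<and> tree_in V E VT ET \<and> proper_edges c ET))"

definition px :: "'a set \<Rightarrow> 'a set set \<Rightarrow> nat \<Rightarrow> nat" where
  "px V E k = (LEAST m. \<exists>c. card (c ` E) = m \<and> k_proper_coloring V E k c)"

end

theory Submission
  imports Defs
begin

text \<open>Grow H to G one vertex at a time, each time attaching a new vertex w to some u of the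
  current subgraph by a pendant edge {u,w}, and finally add the remaining edges of G. Giving the
  pendant edge a fresh colour costs one colour: a k-set S avoiding w already has a proper tree
  inside the old graph, and if w \<in> S, a proper tree through (S - {w}) \<union> {u} extends by the
  pendant edge. Adding edges on a fixed vertex set costs nothing, as the new edges may reuse an old
  colour. Once k exceeds the order of the current subgraph, the only k-set containing w is the
  whole vertex set, so the n_H-proper index of H is what gets carried along.\<close>

lemma adj_rel_iff [simp]: "(x, y) \<in> adj_rel E \<longleftrightarrow> {x, y} \<in> E"
  by (simp add: adj_rel_def)

lemma sym_adj_rel: "sym (adj_rel E)"
  unfolding sym_def adj_rel_def by (auto simp: insert_commute)

lemma rtrancl_adj_rel_sym: "(x, y) \<in> (adj_rel E)\<^sup>* \<Longrightarrow> (y, x) \<in> (adj_rel E)\<^sup>*"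
  using sym_rtrancl[OF sym_adj_rel[of E]] unfolding sym_def by blast

lemma adj_rel_mono: "E \<subseteq> F \<Longrightarrow> adj_rel E \<subseteq> adj_rel F"
  unfolding adj_rel_def by auto

lemma graph_finite_edges: "graph V E \<Longrightarrow> finite E"
  unfolding graph_def by (meson PowI finite_Pow_iff finite_subset subsetI)

lemma rtrancl_leaves_set:
  "(x, y) \<in> R\<^sup>* \<Longrightarrow> x \<in> A \<Longrightarrow> y \<notin> A \<Longrightarrow> \<exists>a b. (a, b) \<in> R \<and> a \<in> A \<and> b \<notin> A"
  by (induction rule: rtrancl_induct) auto

lemma exists_subset_between_card:
  assumes "finite B" "A \<subseteq> B" "card A \<le> n" "n \<le> card B"
  shows "\<exists>C. A \<subseteq> C \<and> C \<subseteq> B \<and> card C = n"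
proof -
  have "finite A" using assms finite_subset by blast
  have "n - card A \<le> card (B - A)"
    using assms \<open>finite A\<close> by (simp add: card_Diff_subset)
  then obtain D where D: "D \<subseteq> B - A" "card D = n - card A" "finite D"
    by (rule obtain_subset_with_card_n)
  have "card (A \<union> D) = card A + card D"
    using D \<open>finite A\<close> by (subst card_Un_disjoint) auto
  then show ?thesis using D assms by (intro exI[of _ "A \<union> D"]) auto
qed

subsection \<open>Spanning trees\<close>

lemma is_cycle_connects_without_first_edge:
  assumes cyc: "is_cycle F xs"
  shows "(xs ! 1, xs ! 0) \<in> (adj_rel (F - {{xs ! 0, xs ! 1}}))\<^sup>*"
proof -
  let ?n = "length xs" and ?R = "adj_rel (F - {{xs ! 0, xs ! 1}})"
  have n3: "?n \<ge> 3" and dist: "distinct xs"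
    and edges: "\<And>i. i < ?n \<Longrightarrow> {xs ! i, xs ! ((i + 1) mod ?n)} \<in> F"
    using cyc unfolding is_cycle_def by auto
  have other_edge: "{xs ! i, xs ! j} \<noteq> {xs ! 0, xs ! 1}"
    if "i < ?n" "j < ?n" "\<not> ((i = 0 \<and> j = 1) \<or> (i = 1 \<and> j = 0))" for i j
  proof -
    have inj: "\<And>a b. a < ?n \<Longrightarrow> b < ?n \<Longrightarrow> xs ! a = xs ! b \<longleftrightarrow> a = b"
      using dist nth_eq_iff_index_eq by blast
    have "0 < ?n" "1 < ?n" using n3 by auto
    then show ?thesis using that inj[of i 0] inj[of i 1] inj[of j 0] inj[of j 1]
      by (auto simp: doubleton_eq_iff)
  qed
  have step: "(xs ! i, xs ! ((i + 1) mod ?n)) \<in> ?R" if "1 \<le> i" "i < ?n" for i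
  proof -
    have "(i + 1) mod ?n < ?n" "(i + 1) mod ?n \<noteq> 1" "i = 1 \<longrightarrow> (i + 1) mod ?n = 2"
      using that n3 by (auto simp: mod_if)
    then have "{xs ! i, xs ! ((i + 1) mod ?n)} \<noteq> {xs ! 0, xs ! 1}"
      using other_edge[of i "(i + 1) mod ?n"] that by auto
    then show ?thesis using edges[OF that(2)] by simp
  qed
  have path: "(xs ! 1, xs ! i) \<in> ?R\<^sup>*" if "1 \<le> i" "i < ?n" for i
    using that
  proof (induction i)
    case (Suc i)
    show ?case
    proof (cases "i = 0")
      case False
      then have "(xs ! 1, xs ! i) \<in> ?R\<^sup>*" "(xs ! i, xs ! Suc i) \<in> ?R"
        using Suc step[of i] by auto
      then show ?thesis by (rule rtrancl_into_rtrancl)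
    qed simp
  qed simp
  have "?n - 1 + 1 = ?n" using n3 by simp
  then have "(?n - 1 + 1) mod ?n = 0" by simp
  then have "(xs ! (?n - 1), xs ! 0) \<in> ?R"
    using step[of "?n - 1"] n3 by simp
  moreover have "(xs ! 1, xs ! (?n - 1)) \<in> ?R\<^sup>*" using path n3 by simp
  ultimately show ?thesis by (simp add: rtrancl_into_rtrancl)
qed

lemma connected_graph_spanning_tree:
  "connected_graph W F \<Longrightarrow> \<exists>F' \<subseteq> F. connected_graph W F' \<and> acyclic_graph F'"
proof (induction "card F" arbitrary: F rule: less_induct)
  case less
  show ?case
  proof (cases "acyclic_graph F")
    case False
    then obtain xs where cyc: "is_cycle F xs" unfolding acyclic_graph_def by blast
    let ?e = "{xs ! 0, xs ! 1}"
    have "?e \<in> F" using cyc unfolding is_cycle_def by (metis One_nat_def Suc_1 Suc_le_eq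
          Suc_lessD add_0 eval_nat_numeral(3) mod_less)
    moreover have "finite F"
      using less.prems graph_finite_edges unfolding connected_graph_def by blast
    ultimately have smaller: "card (F - {?e}) < card F" by (rule card_Diff1_less[rotated])
    have "adj_rel F \<subseteq> (adj_rel (F - {?e}))\<^sup>*"
    proof
      fix p assume "p \<in> adj_rel F"
      then obtain a b where p: "p = (a, b)" "{a, b} \<in> F" by (cases p) auto
      have "(xs ! 1, xs ! 0) \<in> (adj_rel (F - {?e}))\<^sup>*"
        by (rule is_cycle_connects_without_first_edge[OF cyc])
      with p show "p \<in> (adj_rel (F - {?e}))\<^sup>*"
        by (cases "{a, b} = ?e") (auto simp: doubleton_eq_iff dest: rtrancl_adj_rel_sym)
    qed
    then have "connected_graph W (F - {?e})"
      using less.prems rtrancl_subset_rtrancl unfolding connected_graph_def graph_def by blast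
    with less.hyps[OF smaller] show ?thesis by blast
  qed (use less.prems in blast)
qed

definition proper_tree_through :: "'a set \<Rightarrow> 'a set set \<Rightarrow> ('a set \<Rightarrow> nat) \<Rightarrow> 'a set \<Rightarrow> bool" where
  "proper_tree_through V E c S \<longleftrightarrow>
     (\<exists>VT ET. S \<subseteq> VT \<and> tree_in V E VT ET \<and> proper_edges c ET)"

lemma k_proper_coloring_iff:
  "k_proper_coloring V E k c \<longleftrightarrow> (\<forall>S. S \<subseteq> V \<and> card S = k \<longrightarrow> proper_tree_through V E c S)"
  unfolding k_proper_coloring_def proper_tree_through_def ..

lemma proper_tree_throughI:
  assumes "S \<subseteq> VT" "subgraph VT ET V E" "connected_graph VT ET" "proper_edges c ET"
  shows "proper_tree_through V E c S"
proof -
  obtain F where F: "F \<subseteq> ET" "connected_graph VT F" "acyclic_graph F"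
    using connected_graph_spanning_tree[OF assms(3)] by blast
  then have "tree_in V E VT F"
    using assms(2) unfolding tree_in_def subgraph_def connected_graph_def by blast
  moreover have "proper_edges c F"
    using assms(4) F(1) unfolding proper_edges_def by blast
  ultimately show ?thesis using assms(1) unfolding proper_tree_through_def by blast
qed

lemma proper_tree_through_subset:
  "proper_tree_through V E c S \<Longrightarrow> S' \<subseteq> S \<Longrightarrow> proper_tree_through V E c S'"
  unfolding proper_tree_through_def by blast

lemma proper_tree_through_mono:
  assumes "proper_tree_through V E c S" "V \<subseteq> V'" "E \<subseteq> E'" "\<And>e. e \<in> E \<Longrightarrow> c' e = c e"
  shows "proper_tree_through V' E' c' S"
proof -
  obtain VT ET where T: "S \<subseteq> VT" "tree_in V E VT ET" "proper_edges c ET"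
    using assms(1) unfolding proper_tree_through_def by blast
  then have "ET \<subseteq> E" unfolding tree_in_def subgraph_def by blast
  then have "\<forall>e\<in>ET. c' e = c e" using assms(4) by blast
  then have "proper_edges c' ET" using T(3) unfolding proper_edges_def by simp
  moreover have "tree_in V' E' VT ET" using T(2) assms(2,3) unfolding tree_in_def subgraph_def by blast
  ultimately show ?thesis using T(1) unfolding proper_tree_through_def by blast
qed

lemma k_proper_coloring_smaller_sets:
  assumes "k_proper_coloring V E k c" "finite V" "k \<le> card V" "S \<subseteq> V" "card S \<le> k"
  shows "proper_tree_through V E c S"
proof -
  obtain S' where "S \<subseteq> S'" "S' \<subseteq> V" "card S' = k"
    using exists_subset_between_card[OF assms(2,4,5,3)] by blast
  moreover from this have "proper_tree_through V E c S'"
    using assms(1) unfolding k_proper_coloring_iff by blast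
  ultimately show ?thesis using proper_tree_through_subset by blast
qed

subsection \<open>Attaching a pendant edge\<close>

lemma connected_graph_insert_pendant:
  assumes "connected_graph V E" "u \<in> V" "w \<notin> V"
  shows "connected_graph (insert w V) (insert {u, w} E)"
proof -
  let ?V = "insert w V" and ?E = "insert {u, w} E"
  have "u \<noteq> w" using assms(2,3) by blast
  then have "graph ?V ?E" using assms unfolding connected_graph_def graph_def by auto
  moreover have to_u: "(x, u) \<in> (adj_rel ?E)\<^sup>*" if "x \<in> ?V" for x
  proof (cases "x = w")
    case True
    then show ?thesis by (simp add: insert_commute r_into_rtrancl)
  next
    case False
    then have "(x, u) \<in> (adj_rel E)\<^sup>*" using that assms(1,2) unfolding connected_graph_def by auto
    then show ?thesis using rtrancl_mono[OF adj_rel_mono[of E ?E]] by blast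
  qed
  ultimately show ?thesis
    unfolding connected_graph_def by (blast intro: rtrancl_trans rtrancl_adj_rel_sym)
qed

lemma proper_edges_insert:
  "proper_edges c F \<Longrightarrow> c e \<notin> c ` F \<Longrightarrow> proper_edges c (insert e F)"
  unfolding proper_edges_def by (auto 0 3 simp: image_iff)

lemma proper_tree_through_insert_pendant:
  assumes T: "proper_tree_through V E c S" and "u \<in> S" "w \<notin> V"
    and c'_old: "\<And>e. e \<in> E \<Longrightarrow> c' e = c e" and c'_new: "c' {u, w} \<notin> c ` E"
  shows "proper_tree_through (insert w V) (insert {u, w} E) c' (insert w S)"
proof -
  obtain VT ET where "S \<subseteq> VT" "tree_in V E VT ET" and ET_proper: "proper_edges c ET"
    using T unfolding proper_tree_through_def by blast
  then have sub: "VT \<subseteq> V" "ET \<subseteq> E" and conn: "connected_graph VT ET" and "u \<in> VT"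
    using \<open>u \<in> S\<close> unfolding tree_in_def subgraph_def by auto
  have conn': "connected_graph (insert w VT) (insert {u, w} ET)"
    using connected_graph_insert_pendant[OF conn \<open>u \<in> VT\<close>] sub \<open>w \<notin> V\<close> by blast
  moreover have "subgraph (insert w VT) (insert {u, w} ET) (insert w V) (insert {u, w} E)"
    using conn' sub unfolding subgraph_def connected_graph_def by blast
  moreover have "proper_edges c' (insert {u, w} ET)"
  proof (rule proper_edges_insert)
    have "\<forall>e\<in>ET. c' e = c e" using c'_old sub by blast
    then show "proper_edges c' ET" "c' {u, w} \<notin> c' ` ET"
      using ET_proper c'_new sub unfolding proper_edges_def by auto
  qed
  moreover have "insert w S \<subseteq> insert w VT" using \<open>S \<subseteq> VT\<close> by blast
  ultimately show ?thesis by (intro proper_tree_throughI)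
qed

lemma k_proper_coloring_insert_pendant:
  assumes G: "graph V E" and "u \<in> V" "w \<notin> V"
    and c: "k_proper_coloring V E (min k (card V)) c"
    and c'_old: "\<And>e. e \<in> E \<Longrightarrow> c' e = c e" and c'_new: "c' {u, w} \<notin> c ` E"
  shows "k_proper_coloring (insert w V) (insert {u, w} E) k c'"
  unfolding k_proper_coloring_iff
proof (intro allI impI)
  fix S assume S: "S \<subseteq> insert w V \<and> card S = k"
  have "finite V" using G unfolding graph_def by blast
  note smaller = k_proper_coloring_smaller_sets[OF c \<open>finite V\<close> min.cobounded2]
  show "proper_tree_through (insert w V) (insert {u, w} E) c' S"
  proof (cases "w \<in> S")
    case False
    then have "S \<subseteq> V" using S by blast
    then have "proper_tree_through V E c S"
      using smaller card_mono[OF \<open>finite V\<close>] S by simp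
    then show ?thesis by (rule proper_tree_through_mono) (auto simp: c'_old)
  next
    case True
    let ?S' = "insert u (S - {w})"
    have "?S' \<subseteq> V" using S \<open>u \<in> V\<close> by blast
    moreover have "card ?S' \<le> k"
    proof -
      have "finite S" using S \<open>finite V\<close> finite_subset by blast
      then have "k > 0" "card (S - {w}) = k - 1" using S True card_gt_0_iff by auto
      then show ?thesis by (intro card_insert_le_m1) auto
    qed
    ultimately have "proper_tree_through V E c ?S'"
      using smaller card_mono[OF \<open>finite V\<close>] by simp
    then have "proper_tree_through (insert w V) (insert {u, w} E) c' (insert w ?S')"
      using \<open>w \<notin> V\<close> c'_old c'_new by (intro proper_tree_through_insert_pendant) auto
    then show ?thesis by (rule proper_tree_through_subset) blast
  qed
qed

subsection \<open>The proper index\<close>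

lemma k_proper_coloring_exists:
  assumes "connected_graph V E"
  shows "\<exists>c. k_proper_coloring V E k c"
proof -
  obtain F where "F \<subseteq> E" "connected_graph V F"
    using connected_graph_spanning_tree[OF assms] by blast
  have "finite E" using assms graph_finite_edges unfolding connected_graph_def by blast
  then obtain c :: "'a set \<Rightarrow> nat" where "inj_on c E"
    using finite_imp_inj_to_nat_seg by blast
  then have "proper_edges c F" using \<open>F \<subseteq> E\<close> unfolding proper_edges_def inj_on_def by blast
  then have "proper_tree_through V E c S" if "S \<subseteq> V" for S
    using that \<open>F \<subseteq> E\<close> \<open>connected_graph V F\<close> assms
    by (intro proper_tree_throughI) (auto simp: subgraph_def connected_graph_def)
  then show ?thesis unfolding k_proper_coloring_iff by blast
qed

lemma px_attained:
  assumes "connected_graph V E"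
  obtains c where "card (c ` E) = px V E k" "k_proper_coloring V E k c"
proof -
  have "\<exists>m c. card (c ` E) = m \<and> k_proper_coloring V E k c"
    using k_proper_coloring_exists[OF assms] by blast
  from LeastI_ex[OF this] show ?thesis using that unfolding px_def by blast
qed

lemma px_le: "k_proper_coloring V E k c \<Longrightarrow> px V E k \<le> card (c ` E)"
  unfolding px_def by (rule Least_le) blast

lemma px_insert_pendant_le:
  assumes H: "connected_graph V E" and "u \<in> V" "w \<notin> V"
  shows "px (insert w V) (insert {u, w} E) k \<le> Suc (px V E (min k (card V)))"
proof -
  obtain c where c: "card (c ` E) = px V E (min k (card V))" "k_proper_coloring V E (min k (card V)) c"
    using px_attained[OF H] by blast
  have "finite (c ` E)" using H graph_finite_edges unfolding connected_graph_def by blast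
  then obtain fresh where fresh: "fresh \<notin> c ` E" using ex_new_if_finite infinite_UNIV_nat by blast
  define c' where "c' = c({u, w} := fresh)"
  have "{u, w} \<notin> E" using H \<open>w \<notin> V\<close> unfolding connected_graph_def graph_def by blast
  then have c'_old: "\<And>e. e \<in> E \<Longrightarrow> c' e = c e" unfolding c'_def by auto
  then have "c' ` E = c ` E" by (rule image_cong[OF refl])
  moreover have "c' {u, w} = fresh" by (simp add: c'_def)
  ultimately have "c' ` insert {u, w} E = insert fresh (c ` E)" by simp
  then have "card (c' ` insert {u, w} E) = Suc (px V E (min k (card V)))"
    using fresh \<open>finite (c ` E)\<close> c(1) by simp
  moreover have "k_proper_coloring (insert w V) (insert {u, w} E) k c'"
    using H assms(2,3) c(2) c'_old fresh unfolding connected_graph_def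
    by (intro k_proper_coloring_insert_pendant) (auto simp: c'_def)
  ultimately show ?thesis using px_le by metis
qed

lemma connected_graph_no_edges_singleton:
  assumes "connected_graph V {}"
  obtains v where "V = {v}"
proof -
  obtain v where "v \<in> V" using assms unfolding connected_graph_def by blast
  moreover have "x = v" if "x \<in> V" for x
    using assms that \<open>v \<in> V\<close> unfolding connected_graph_def adj_rel_def by auto
  ultimately show ?thesis using that by blast
qed

lemma px_spanning_subgraph_le:
  assumes "graph V E" "EH \<subseteq> E" "connected_graph V EH"
  shows "px V E k \<le> px V EH k"
proof (cases "EH = {}")
  case True
  then obtain v where "V = {v}" using assms(3) connected_graph_no_edges_singleton by blast
  then have "E = {}" using assms(1) unfolding graph_def by (fastforce simp: subset_singleton_iff)
  with True show ?thesis by simp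
next
  case False
  then obtain e0 where "e0 \<in> EH" by blast
  obtain c where c: "card (c ` EH) = px V EH k" "k_proper_coloring V EH k c"
    using px_attained[OF assms(3)] by blast
  define c' where "c' e = (if e \<in> EH then c e else c e0)" for e
  have "c' ` E = c ` EH" using \<open>e0 \<in> EH\<close> assms(2) unfolding c'_def by force
  moreover have "k_proper_coloring V E k c'"
    using c(2) proper_tree_through_mono[of V EH c _ V E c'] assms(2)
    unfolding k_proper_coloring_iff c'_def by simp
  ultimately show ?thesis using px_le c(1) by metis
qed

lemma connected_graph_edge_leaving:
  assumes "connected_graph V E" "U \<subseteq> V" "U \<noteq> {}" "U \<noteq> V"
  obtains u w where "{u, w} \<in> E" "u \<in> U" "w \<notin> U" "w \<in> V"
proof -
  obtain x y where "x \<in> U" "y \<in> V" "y \<notin> U" using assms(2-4) by blast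
  then have "(x, y) \<in> (adj_rel E)\<^sup>*"
    using assms(1,2) unfolding connected_graph_def by blast
  then obtain u w where "{u, w} \<in> E" "u \<in> U" "w \<notin> U"
    using rtrancl_leaves_set \<open>x \<in> U\<close> \<open>y \<notin> U\<close> adj_rel_iff by metis
  moreover from this have "w \<in> V" using assms(1) unfolding connected_graph_def graph_def by blast
  ultimately show ?thesis using that by blast
qed

lemma px_le_px_connected_subgraph:
  assumes G: "connected_graph V E"
  shows "connected_graph VH EH \<Longrightarrow> subgraph VH EH V E \<Longrightarrow> k \<le> card V \<Longrightarrow>
    px V E k \<le> px VH EH (min k (card VH)) + (card V - card VH)"
proof (induction "card (V - VH)" arbitrary: VH EH rule: less_induct)
  case less
  have "finite V" using G unfolding connected_graph_def graph_def by blast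
  have sub: "VH \<subseteq> V" "EH \<subseteq> E" using less.prems unfolding subgraph_def by auto
  show ?case
  proof (cases "VH = V")
    case True
    then show ?thesis
      using px_spanning_subgraph_le[of V E EH k] less.prems G sub
      unfolding connected_graph_def by auto
  next
    case False
    have "VH \<noteq> {}" using less.prems(1) unfolding connected_graph_def by blast
    then obtain u w where uw: "{u, w} \<in> E" "u \<in> VH" "w \<notin> VH" and "w \<in> V"
      using connected_graph_edge_leaving[OF G] sub False by blast
    let ?VH = "insert w VH" and ?EH = "insert {u, w} EH"
    have conn: "connected_graph ?VH ?EH"
      using connected_graph_insert_pendant[OF less.prems(1) uw(2,3)] .
    have "subgraph ?VH ?EH V E"
      using conn sub \<open>w \<in> V\<close> uw unfolding subgraph_def connected_graph_def by auto
    moreover have "card (V - ?VH) < card (V - VH)"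
      using \<open>finite V\<close> \<open>w \<in> V\<close> uw(3) by (metis DiffI Diff_insert card_Diff1_less finite_Diff)
    ultimately have IH: "px V E k \<le> px ?VH ?EH (min k (card ?VH)) + (card V - card ?VH)"
      using less.hyps conn less.prems(3) by blast
    have "finite VH" using \<open>finite V\<close> sub finite_subset by blast
    have card_VH: "card ?VH = Suc (card VH)"
      using \<open>finite VH\<close> uw(3) by simp
    have "card ?VH \<le> card V"
      using \<open>finite V\<close> sub \<open>w \<in> V\<close> by (intro card_mono) auto
    have "min (min k (card ?VH)) (card VH) = min k (card VH)"
      using card_VH(1) by linarith
    then have "px ?VH ?EH (min k (card ?VH)) \<le> Suc (px VH EH (min k (card VH)))"
      using px_insert_pendant_le[OF less.prems(1) uw(2,3), of "min k (card ?VH)"] by simp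
    with IH card_VH \<open>card ?VH \<le> card V\<close> show ?thesis by linarith
  qed
qed

theorem lemma2p9:
  fixes V VH :: "'a set" and E EH :: "'a set set"
  assumes "connected_graph V E"
    and "subgraph VH EH V E"
    and "connected_graph VH EH"
  shows "(\<forall>k. 3 \<le> k \<and> k \<le> card VH \<longrightarrow>
            px V E k \<le> px VH EH k + card V - card VH)
       \<and> (\<forall>k. card VH \<le> k \<and> k \<le> card V \<longrightarrow>
            px V E k \<le> px VH EH (card VH) + card V - card VH)"
proof -
  have le: "card VH \<le> card V"
    using assms unfolding subgraph_def connected_graph_def graph_def by (meson card_mono)
  note bound = px_le_px_connected_subgraph[OF assms(1,3,2)]
  have "px V E k \<le> px VH EH k + card V - card VH" if "k \<le> card VH" for k
    using bound[of k] le that by (simp add: min_absorb1)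
  moreover have "px V E k \<le> px VH EH (card VH) + card V - card VH"
    if "card VH \<le> k" "k \<le> card V" for k
    using bound[of k] le that by (simp add: min_absorb2)
  ultimately show ?thesis by blast
qed

end
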